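(* (1) If $f_1,\dots,f_k\in\mathrm{CN}^n$ and $w_1,\dots,w_k\ge 0$, then $g(x)=\max_{1\le i\le k} w_i f_i(x)$ with $\mathrm{dom}(g)=\bigcap_{i}\mathrm{dom}(f_i)$ belongs to $\mathrm{CN}^n$. (2) If $f\in\mathrm{CN}^n$ and $h:\mathbb{R}\to\mathbb{R}$ is conic and non-decreasing, then $h\circ f\in\mathrm{CN}^n$. (3) If $f\in\mathrm{CN}^m$, $A\in\mathbb{R}^{m\times n}$, $b\in\mathbb{R}^m$, then $g(x)=f(Ax+b)$, with $\mathrm{dom}(g)=\{x: Ax+b\in\mathrm{dom}(f)\}$, belongs to $\mathrm{CN}^n$. (4) If $f_1,f_2\in\mathrm{CN}^n$ and $D=\mathrm{dom}(f_1)\cap\mathrm{dom}(f_2)$, then $g(x)=(f_1(x),f_2(x)):D\to\mathbb{R}^2$ is conic with respect to the lexicographic order on $\mathbb{R}^2$.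
   Context: A function $f:\mathrm{dom}(f)\to \Omega$, with $\mathrm{dom}(f)\subseteq\mathbb{R}^n$ convex and $\Omega$ a totally ordered set (e.g. $\mathbb{R}$, or $\mathbb{R}^2$ with lexicographic order), is conic if for all $y,z\in\mathrm{dom}(f)$ and all $t\ge 0$ with $f(y)\le f(z)$ and $z+t(z-y)\in\mathrm{dom}(f)$, we have $f(z+t(z-y))\ge f(z)$. $\mathrm{CN}^n$ denotes the class of real-valued conic functions with domain a convex subset of $\mathbb{R}^n$. *)

theory Defs
  imports "HOL-Analysis.Analysis"
begin

text \<open>A function is represented by its (convex) domain D together with a total
HOL function f, of which only the values on D matter. Conicity is defined
relative to a total order le on the codomain.\<close>

definition conic_wrt :: "('b \<Rightarrow> 'b \<Rightarrow> bool) \<Rightarrow> ('a::real_vector) set \<Rightarrow> ('a \<Rightarrow> 'b) \<Rightarrow> bool" where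
  "conic_wrt le D f \<longleftrightarrow> convex D \<and>
     (\<forall>y\<in>D. \<forall>z\<in>D. \<forall>t::real. t \<ge> 0 \<longrightarrow> le (f y) (f z) \<longrightarrow>
        z + t *\<^sub>R (z - y) \<in> D \<longrightarrow> le (f z) (f (z + t *\<^sub>R (z - y))))"

definition conic_on :: "('a::real_vector) set \<Rightarrow> ('a \<Rightarrow> 'b::linorder) \<Rightarrow> bool" where
  "conic_on D f \<longleftrightarrow> conic_wrt (\<le>) D f"

definition lex_le :: "real \<times> real \<Rightarrow> real \<times> real \<Rightarrow> bool" where
  "lex_le p q \<longleftrightarrow> fst p < fst q \<or> (fst p = fst q \<and> snd p \<le> snd q)"

end

theory Submission
  imports Defs
begin

text \<open>Each construction is checked along a single ray y, z, z' = z + t(z - y).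
A maximum is attained at z by one component, whose own conicity carries the
maximum along. A non-decreasing conic outer function h only needs the ray
property on the real line, where f(z) lies between f(y) and f(z') unless
monotonicity of h already settles the claim. Affine maps send rays to rays.
For the lexicographic pair, if the first component does not increase from z to
z', then reversing the ray shows it did not increase from y to z either, so the
first components agree at y and z and the second component decides.\<close>

lemma conic_wrtI:
  assumes "convex D"
    and "\<And>y z t. y \<in> D \<Longrightarrow> z \<in> D \<Longrightarrow> 0 \<le> t \<Longrightarrow> le (f y) (f z) \<Longrightarrow>
           z + t *\<^sub>R (z - y) \<in> D \<Longrightarrow> le (f z) (f (z + t *\<^sub>R (z - y)))"
  shows "conic_wrt le D f"
  using assms unfolding conic_wrt_def by blast

lemma conic_wrt_convex: "conic_wrt le D f \<Longrightarrow> convex D"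
  unfolding conic_wrt_def by blast

lemma conic_on_convex: "conic_on D f \<Longrightarrow> convex D"
  unfolding conic_on_def by (rule conic_wrt_convex)

lemma conic_wrtD:
  assumes "conic_wrt le D f" and "y \<in> D" and "z \<in> D" and "0 \<le> t"
    and "le (f y) (f z)" and "z + t *\<^sub>R (z - y) \<in> D"
  shows "le (f z) (f (z + t *\<^sub>R (z - y)))"
  using assms unfolding conic_wrt_def by blast

lemma conic_onD:
  "conic_on D f \<Longrightarrow> y \<in> D \<Longrightarrow> z \<in> D \<Longrightarrow> 0 \<le> t \<Longrightarrow> f y \<le> f z \<Longrightarrow>
    z + t *\<^sub>R (z - y) \<in> D \<Longrightarrow> f z \<le> f (z + t *\<^sub>R (z - y))"
  unfolding conic_on_def by (rule conic_wrtD)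

text \<open>Reversing the ray: y lies on the ray from z + t(z - y) through z.\<close>

lemma conic_wrt_ray_reverse:
  assumes conic: "conic_wrt le D f" and "y \<in> D" and z: "z \<in> D" and t: "0 < t"
    and z': "z + t *\<^sub>R (z - y) \<in> D" and le: "le (f (z + t *\<^sub>R (z - y))) (f z)"
  shows "le (f z) (f y)"
proof -
  have y_on_reversed_ray: "z + (1/t) *\<^sub>R (z - (z + t *\<^sub>R (z - y))) = y"
    using t by (simp add: algebra_simps)
  have "le (f z) (f (z + (1/t) *\<^sub>R (z - (z + t *\<^sub>R (z - y)))))"
    by (rule conic_wrtD[OF conic z' z _ le])
      (use t \<open>y \<in> D\<close> in \<open>simp_all add: y_on_reversed_ray\<close>)
  then show ?thesis
    unfolding y_on_reversed_ray .
qed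

lemma conic_on_scale:
  fixes f :: "'a::real_vector \<Rightarrow> real"
  assumes conic: "conic_on D f" and c: "0 \<le> c"
  shows "conic_on D (\<lambda>x. c * f x)"
  unfolding conic_on_def
proof (rule conic_wrtI)
  show "convex D"
    using conic by (rule conic_on_convex)
next
  fix y z and t :: real
  assume "y \<in> D" "z \<in> D" "0 \<le> t" and le: "c * f y \<le> c * f z"
    and "z + t *\<^sub>R (z - y) \<in> D"
  show "c * f z \<le> c * f (z + t *\<^sub>R (z - y))"
  proof (cases "c = 0")
    case False
    with c le have "f y \<le> f z"
      by (simp add: mult_le_cancel_left)
    then have "f z \<le> f (z + t *\<^sub>R (z - y))"
      using conic \<open>y \<in> D\<close> \<open>z \<in> D\<close> \<open>0 \<le> t\<close> \<open>z + t *\<^sub>R (z - y) \<in> D\<close>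
      by (blast intro: conic_onD)
    with c show ?thesis
      by (rule mult_left_mono[rotated])
  qed simp
qed

lemma conic_on_Max:
  fixes g :: "'i \<Rightarrow> 'a::real_vector \<Rightarrow> 'b::linorder"
  assumes "finite I" and "I \<noteq> {}" and conic: "\<And>i. i \<in> I \<Longrightarrow> conic_on (D i) (g i)"
  shows "conic_on (\<Inter>i\<in>I. D i) (\<lambda>x. Max ((\<lambda>i. g i x) ` I))"
  unfolding conic_on_def
proof (rule conic_wrtI)
  show "convex (\<Inter>i\<in>I. D i)"
    using conic by (intro convex_INT conic_on_convex)
next
  let ?max = "\<lambda>x. Max ((\<lambda>i. g i x) ` I)"
  fix y z and t :: real
  assume y: "y \<in> (\<Inter>i\<in>I. D i)" and z: "z \<in> (\<Inter>i\<in>I. D i)" and "0 \<le> t"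
    and le: "?max y \<le> ?max z" and z': "z + t *\<^sub>R (z - y) \<in> (\<Inter>i\<in>I. D i)"
  have below_max: "g j x \<le> ?max x" if "j \<in> I" for j x
    using \<open>finite I\<close> that by simp
  have "?max z \<in> (\<lambda>i. g i z) ` I"
    using \<open>finite I\<close> \<open>I \<noteq> {}\<close> by (intro Max_in) auto
  then obtain i where i: "i \<in> I" and attained: "?max z = g i z"
    by auto
  have "g i y \<le> g i z"
    using below_max[OF i, of y] le attained by simp
  then have "g i z \<le> g i (z + t *\<^sub>R (z - y))"
    using conic[OF i] y z z' i \<open>0 \<le> t\<close> by (blast intro: conic_onD)
  then show "?max z \<le> ?max (z + t *\<^sub>R (z - y))"
    using attained below_max[OF i] by (metis order_trans)
qed

lemma conic_on_comp_mono:
  fixes f :: "'a::real_vector \<Rightarrow> real" and h :: "real \<Rightarrow> 'b::linorder"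
  assumes conic_f: "conic_on D f" and conic_h: "conic_on UNIV h" and "mono h"
  shows "conic_on D (h \<circ> f)"
  unfolding conic_on_def
proof (rule conic_wrtI)
  show "convex D"
    using conic_f by (rule conic_on_convex)
next
  fix y z :: 'a and t :: real
  let ?z' = "z + t *\<^sub>R (z - y)"
  assume "y \<in> D" "z \<in> D" "0 \<le> t" and le: "(h \<circ> f) y \<le> (h \<circ> f) z" and "?z' \<in> D"
  consider "f y \<le> f z" | "f z \<le> f ?z'" | "f ?z' < f z" "f z < f y"
    by linarith
  then show "(h \<circ> f) z \<le> (h \<circ> f) ?z'"
  proof cases
    case 1
    then have "f z \<le> f ?z'"
      using conic_f \<open>y \<in> D\<close> \<open>z \<in> D\<close> \<open>0 \<le> t\<close> \<open>?z' \<in> D\<close> by (blast intro: conic_onD)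
    then show ?thesis
      using \<open>mono h\<close> by (simp add: monoD)
  next
    case 2
    then show ?thesis
      using \<open>mono h\<close> by (simp add: monoD)
  next
    case 3
    \<comment> \<open>f z' lies on the ray of the real line from f y through f z\<close>
    define s where "s = (f z - f ?z') / (f y - f z)"
    have "0 \<le> s" and ray: "f z + s * (f z - f y) = f ?z'"
      using 3 unfolding s_def by (simp_all add: field_simps)
    have "h (f z) \<le> h (f z + s *\<^sub>R (f z - f y))"
      using conic_onD[OF conic_h _ _ \<open>0 \<le> s\<close>] le by simp
    then show ?thesis
      using ray by simp
  qed
qed

lemma conic_wrt_affine_comp:
  assumes "linear L" and conic: "conic_wrt le D f"
  shows "conic_wrt le {x. L x + b \<in> D} (\<lambda>x. f (L x + b))"
proof (rule conic_wrtI)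
  have "{x. L x + b \<in> D} = L -` ((\<lambda>d. d - b) ` D)"
    by force
  then show "convex {x. L x + b \<in> D}"
    using conic by (simp add: conic_wrt_convex convex_linear_vimage[OF \<open>linear L\<close>]
        convex_translation_subtract)
next
  fix y z and t :: real
  assume y: "y \<in> {x. L x + b \<in> D}" and z: "z \<in> {x. L x + b \<in> D}" and "0 \<le> t"
    and le: "le (f (L y + b)) (f (L z + b))" and z': "z + t *\<^sub>R (z - y) \<in> {x. L x + b \<in> D}"
  have ray: "L (z + t *\<^sub>R (z - y)) + b = (L z + b) + t *\<^sub>R ((L z + b) - (L y + b))"
    using \<open>linear L\<close> by (simp add: linear_add linear_scale linear_diff algebra_simps)
  have extended: "(L z + b) + t *\<^sub>R ((L z + b) - (L y + b)) \<in> D"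
    using z' by (simp only: mem_Collect_eq ray)
  show "le (f (L z + b)) (f (L (z + t *\<^sub>R (z - y)) + b))"
    unfolding ray by (rule conic_wrtD[OF conic _ _ \<open>0 \<le> t\<close> le extended]) (use y z in simp_all)
qed

lemma conic_wrt_lex_pair:
  fixes f1 f2 :: "'a::real_vector \<Rightarrow> real"
  assumes conic1: "conic_on D1 f1" and conic2: "conic_on D2 f2"
  shows "conic_wrt lex_le (D1 \<inter> D2) (\<lambda>x. (f1 x, f2 x))"
proof (rule conic_wrtI)
  show "convex (D1 \<inter> D2)"
    using conic1 conic2 by (intro convex_Int conic_on_convex)
next
  fix y z :: 'a and t :: real
  let ?z' = "z + t *\<^sub>R (z - y)"
  assume y: "y \<in> D1 \<inter> D2" and z: "z \<in> D1 \<inter> D2" and "0 \<le> t"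
    and le: "lex_le (f1 y, f2 y) (f1 z, f2 z)" and z': "?z' \<in> D1 \<inter> D2"
  have "f1 y \<le> f1 z"
    using le by (auto simp: lex_le_def)
  then have first: "f1 z \<le> f1 ?z'"
    using conic1 y z z' \<open>0 \<le> t\<close> by (blast intro: conic_onD)
  show "lex_le (f1 z, f2 z) (f1 ?z', f2 ?z')"
  proof (cases "f1 z < f1 ?z' \<or> t = 0")
    case True
    then show ?thesis
      by (auto simp: lex_le_def)
  next
    case False
    then have eq: "f1 ?z' = f1 z" and "0 < t"
      using first \<open>0 \<le> t\<close> by auto
    have "f1 z \<le> f1 y"
      using conic_wrt_ray_reverse[of "(\<le>)" D1 f1 y z t] conic1 y z z' eq \<open>0 < t\<close>
      by (simp add: conic_on_def)
    with le have "f2 y \<le> f2 z"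
      by (simp add: lex_le_def)
    then have "f2 z \<le> f2 ?z'"
      using conic2 y z z' \<open>0 \<le> t\<close> by (blast intro: conic_onD)
    with eq show ?thesis
      by (simp add: lex_le_def)
  qed
qed

theorem mainTheorem3:
  shows "(\<forall>(k::nat) (D::nat \<Rightarrow> (real^'n) set) (fs::nat \<Rightarrow> real^'n \<Rightarrow> real) (w::nat \<Rightarrow> real).
            k \<ge> 1 \<and> (\<forall>i\<in>{1..k}. conic_on (D i) (fs i) \<and> w i \<ge> 0) \<longrightarrow>
            conic_on (\<Inter>i\<in>{1..k}. D i) (\<lambda>x. Max ((\<lambda>i. w i * fs i x) ` {1..k})))
       \<and> (\<forall>(D::(real^'n) set) (f::real^'n \<Rightarrow> real) (h::real \<Rightarrow> real).
            conic_on D f \<and> conic_on UNIV h \<and> mono h \<longrightarrow> conic_on D (h \<circ> f))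
       \<and> (\<forall>(D::(real^'m) set) (f::real^'m \<Rightarrow> real) (A::real^'n^'m) (b::real^'m).
            conic_on D f \<longrightarrow> conic_on {x. A *v x + b \<in> D} (\<lambda>x. f (A *v x + b)))
       \<and> (\<forall>(D1::(real^'n) set) (D2::(real^'n) set) (f1::real^'n \<Rightarrow> real) (f2::real^'n \<Rightarrow> real).
            conic_on D1 f1 \<and> conic_on D2 f2 \<longrightarrow>
            conic_wrt lex_le (D1 \<inter> D2) (\<lambda>x. (f1 x, f2 x)))"
proof (intro conjI allI impI; (elim conjE)?)
  fix k :: nat and D :: "nat \<Rightarrow> (real^'n) set" and fs :: "nat \<Rightarrow> real^'n \<Rightarrow> real"
    and w :: "nat \<Rightarrow> real"
  assume "k \<ge> 1" and components: "\<forall>i\<in>{1..k}. conic_on (D i) (fs i) \<and> w i \<ge> 0"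
  show "conic_on (\<Inter>i\<in>{1..k}. D i) (\<lambda>x. Max ((\<lambda>i. w i * fs i x) ` {1..k}))"
  proof (rule conic_on_Max)
    show "{1..k} \<noteq> {}"
      using \<open>k \<ge> 1\<close> by simp
    show "conic_on (D i) (\<lambda>x. w i * fs i x)" if "i \<in> {1..k}" for i
      using components that by (simp add: conic_on_scale)
  qed simp
next
  fix D :: "(real^'n) set" and f :: "real^'n \<Rightarrow> real" and h :: "real \<Rightarrow> real"
  assume "conic_on D f" and "conic_on UNIV h" and "mono h"
  then show "conic_on D (h \<circ> f)"
    by (rule conic_on_comp_mono)
next
  fix D and f :: "real^'m \<Rightarrow> real" and A :: "real^'n^'m" and b
  assume "conic_on D f"
  then show "conic_on {x. A *v x + b \<in> D} (\<lambda>x. f (A *v x + b))"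
    unfolding conic_on_def by (rule conic_wrt_affine_comp[rotated]) simp
next
  fix D1 D2 :: "(real^'n) set" and f1 f2 :: "real^'n \<Rightarrow> real"
  assume "conic_on D1 f1" and "conic_on D2 f2"
  then show "conic_wrt lex_le (D1 \<inter> D2) (\<lambda>x. (f1 x, f2 x))"
    by (rule conic_wrt_lex_pair)
qed

end
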